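(* Let $\ell\ge 1$ and let $G$ be a cyclically $\ell$-edge-connected cubic graph with at least $2\ell+2$ vertices. Let $v_1v_2v_3v_4$ be a path in $G$ (on four distinct vertices), let $v_1'$ be the neighbor of $v_2$ different from $v_1$ and $v_3$, and let $v_4'$ be the neighbor of $v_3$ different from $v_2$ and $v_4$. Let $G'$ be the graph obtained from $G$ by splitting off the path $v_1v_2v_3v_4$. If $E(A',B')$ is a cyclic $\ell'$-edge-cut of $G'$ with $\ell'<\ell$, then $\ell'\ge \ell-2$, and neither the edge $v_1v_4$ nor the edge $v_1'v_4'$ belongs to $E(A',B')$.
   Context: Graphs may have parallel edges. For a partition $\{A,B\}$ of $V(G)$, $E(A,B)$ is the set of edges with one end in $A$ and the other in $B$; it is an $\ell$-edge-cut if it has exactly $\ell$ edges, and it is cyclic if both $G[A]$ and $G[B]$ contain a cycle. $G$ is cyclically $\ell$-edge-connected if it has no cyclic edge-cut of size less than $\ell$. Splitting off a path $v_1v_2v_3v_4$ in a cubic graph $G$: remove the vertices $v_2,v_3$ (with incident edges) and add the edges $v_1v_4$ and $v_1'v_4'$, where $v_1'$ is the neighbor of $v_2$ other than $v_1,v_3$ and $v_4'$ is the neighbor of $v_3$ other than $v_2,v_4$. *)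

theory Defs
  imports Main
begin

text \<open>Multigraphs (parallel edges and loops representable): a vertex set V,
an edge set E of abstract edge names, and an endpoint map ends : E -> V x V
(the order of the pair is irrelevant).\<close>

definition multigraph :: "'v set \<Rightarrow> 'e set \<Rightarrow> ('e \<Rightarrow> 'v \<times> 'v) \<Rightarrow> bool" where
  "multigraph V E ends \<longleftrightarrow> finite V \<and> finite E \<and>
     (\<forall>e\<in>E. fst (ends e) \<in> V \<and> snd (ends e) \<in> V)"

definition loopless :: "'e set \<Rightarrow> ('e \<Rightarrow> 'v \<times> 'v) \<Rightarrow> bool" where
  "loopless E ends \<longleftrightarrow> (\<forall>e\<in>E. fst (ends e) \<noteq> snd (ends e))"

text \<open>Degree; a loop counts twice.\<close>
definition degree :: "'e set \<Rightarrow> ('e \<Rightarrow> 'v \<times> 'v) \<Rightarrow> 'v \<Rightarrow> nat" where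
  "degree E ends v = card {e\<in>E. fst (ends e) = v} + card {e\<in>E. snd (ends e) = v}"

definition cubic :: "'v set \<Rightarrow> 'e set \<Rightarrow> ('e \<Rightarrow> 'v \<times> 'v) \<Rightarrow> bool" where
  "cubic V E ends \<longleftrightarrow> (\<forall>v\<in>V. degree E ends v = 3)"

definition joins :: "('e \<Rightarrow> 'v \<times> 'v) \<Rightarrow> 'e \<Rightarrow> 'v \<Rightarrow> 'v \<Rightarrow> bool" where
  "joins ends e u w \<longleftrightarrow> ends e = (u, w) \<or> ends e = (w, u)"

text \<open>The induced subgraph on A contains a cycle: distinct vertices
 vs!0,...,vs!(k-1) in A and distinct edges es!i of E joining vs!i and
 vs!((i+1) mod k).  k = 1 is a loop, k = 2 a pair of parallel edges.\<close>
definition has_cycle :: "'e set \<Rightarrow> ('e \<Rightarrow> 'v \<times> 'v) \<Rightarrow> 'v set \<Rightarrow> bool" where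
  "has_cycle E ends A \<longleftrightarrow> (\<exists>vs es. length vs \<ge> 1 \<and> length es = length vs \<and>
      distinct vs \<and> distinct es \<and> set vs \<subseteq> A \<and> set es \<subseteq> E \<and>
      (\<forall>i < length vs. joins ends (es ! i) (vs ! i) (vs ! ((i + 1) mod length vs))))"

definition cut_edges :: "'e set \<Rightarrow> ('e \<Rightarrow> 'v \<times> 'v) \<Rightarrow> 'v set \<Rightarrow> 'v set \<Rightarrow> 'e set" where
  "cut_edges E ends A B = {e\<in>E. (fst (ends e) \<in> A \<and> snd (ends e) \<in> B) \<or>
                                  (fst (ends e) \<in> B \<and> snd (ends e) \<in> A)}"

definition vpartition :: "'v set \<Rightarrow> 'v set \<Rightarrow> 'v set \<Rightarrow> bool" where
  "vpartition V A B \<longleftrightarrow> A \<union> B = V \<and> A \<inter> B = {} \<and> A \<noteq> {} \<and> B \<noteq> {}"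

definition cyclic_cut :: "'v set \<Rightarrow> 'e set \<Rightarrow> ('e \<Rightarrow> 'v \<times> 'v) \<Rightarrow> 'v set \<Rightarrow> 'v set \<Rightarrow> bool" where
  "cyclic_cut V E ends A B \<longleftrightarrow> vpartition V A B \<and> has_cycle E ends A \<and> has_cycle E ends B"

definition cyc_edge_connected :: "nat \<Rightarrow> 'v set \<Rightarrow> 'e set \<Rightarrow> ('e \<Rightarrow> 'v \<times> 'v) \<Rightarrow> bool" where
  "cyc_edge_connected l V E ends \<longleftrightarrow>
     (\<forall>A B. cyclic_cut V E ends A B \<longrightarrow> card (cut_edges E ends A B) \<ge> l)"

text \<open>Splitting off the path v1 v2 v3 v4 (with v1' the third neighbour of v2 and
 v4' the third neighbour of v3): delete v2, v3 and their incident edges; old edges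
 are tagged Inl, the new edge v1v4 is Inr True and the new edge v1'v4' is Inr False.\<close>
definition split_V :: "'v set \<Rightarrow> 'v \<Rightarrow> 'v \<Rightarrow> 'v set" where
  "split_V V v2 v3 = V - {v2, v3}"

definition split_E :: "'e set \<Rightarrow> ('e \<Rightarrow> 'v \<times> 'v) \<Rightarrow> 'v \<Rightarrow> 'v \<Rightarrow> ('e + bool) set" where
  "split_E E ends v2 v3 =
     Inl ` {e\<in>E. fst (ends e) \<notin> {v2, v3} \<and> snd (ends e) \<notin> {v2, v3}} \<union> {Inr True, Inr False}"

definition split_ends :: "('e \<Rightarrow> 'v \<times> 'v) \<Rightarrow> 'v \<Rightarrow> 'v \<Rightarrow> 'v \<Rightarrow> 'v \<Rightarrow> ('e + bool) \<Rightarrow> 'v \<times> 'v" where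
  "split_ends ends v1 v4 v1' v4' x =
     (case x of Inl e \<Rightarrow> ends e | Inr True \<Rightarrow> (v1, v4) | Inr False \<Rightarrow> (v1', v4'))"

end

theory Submission
  imports Defs
begin

text \<open>
  Put v2, v3 back on either side of the cut.  Each of the two resulting
  partitions of G is cut by the old edges of E(A', B') plus those of the edges v2v1, v2v1', v3v4,
  v3v4' whose outer end lies on the other side.  A cycle of G'[A'] lifts to a cycle of G on
  A' plus v2, v3, and even to one in G[A'] unless A' contains both ends of a new edge.  So each
  lifted cut is either a cyclic cut of G, hence has at least l edges, or has an acyclic side S,
  and then it has at least |S| + 2 edges since G is cubic.  Comparing these bounds with
  |V| \<ge> 2l + 2 is a finite case analysis.
\<close>

definition incident :: "('e \<Rightarrow> 'v \<times> 'v) \<Rightarrow> 'e \<Rightarrow> 'v \<Rightarrow> bool" where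
  "incident ends e u \<longleftrightarrow> fst (ends e) = u \<or> snd (ends e) = u"

definition inside :: "('e \<Rightarrow> 'v \<times> 'v) \<Rightarrow> 'v set \<Rightarrow> 'e \<Rightarrow> bool" where
  "inside ends T e \<longleftrightarrow> fst (ends e) \<in> T \<and> snd (ends e) \<in> T"

text \<open>u meets two distinct edges of F lying inside T; T has minimum degree two if it is
  nonempty and this holds at each of its vertices.  Such sets are exactly what cycles span.\<close>
definition two_edges_at :: "'e set \<Rightarrow> ('e \<Rightarrow> 'v \<times> 'v) \<Rightarrow> 'v set \<Rightarrow> 'v \<Rightarrow> bool" where
  "two_edges_at F ends T u \<longleftrightarrow> (\<exists>e1\<in>F. \<exists>e2\<in>F. e1 \<noteq> e2 \<and>
      incident ends e1 u \<and> incident ends e2 u \<and> inside ends T e1 \<and> inside ends T e2)"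

definition min_deg2 :: "'e set \<Rightarrow> ('e \<Rightarrow> 'v \<times> 'v) \<Rightarrow> 'v set \<Rightarrow> bool" where
  "min_deg2 F ends T \<longleftrightarrow> T \<noteq> {} \<and> (\<forall>u\<in>T. two_edges_at F ends T u)"

lemma two_edges_atI:
  assumes "e1 \<in> F" "e2 \<in> F" "e1 \<noteq> e2" "joins ends e1 u a" "joins ends e2 u b" "{u, a, b} \<subseteq> T"
  shows "two_edges_at F ends T u"
  unfolding two_edges_at_def
  by (intro bexI[of _ e1] bexI[of _ e2]) (use assms in \<open>auto simp: joins_def incident_def inside_def\<close>)

lemma has_cycle_mono: "has_cycle F ends A \<Longrightarrow> A \<subseteq> B \<Longrightarrow> has_cycle F ends B"
  unfolding has_cycle_def by blast

lemma joins_sym: "joins ends e a b \<Longrightarrow> joins ends e b a"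
  unfolding joins_def by auto

lemma joins_cases: "joins ends e a b \<Longrightarrow> joins ends e c d \<Longrightarrow> (a = c \<and> b = d) \<or> (a = d \<and> b = c)"
  unfolding joins_def by auto

lemma crossing_edge_end:
  assumes "joins ends e w u" "u \<notin> Q"
    and "(fst (ends e) \<in> X \<and> snd (ends e) \<in> Q) \<or> (fst (ends e) \<in> Q \<and> snd (ends e) \<in> X)"
  shows "w \<in> Q"
  using assms unfolding joins_def by auto

lemma first_repeat:
  fixes x :: "nat \<Rightarrow> 'a"
  assumes "finite T" and "\<And>n. x n \<in> T"
  obtains I J where "I < J" "x I = x J" "\<And>s t. s < t \<Longrightarrow> t < J \<Longrightarrow> x s \<noteq> x t"
proof -
  have "\<not> inj x"
    using assms finite_imageD[of x UNIV] finite_subset[of "range x" T] by auto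
  then obtain a b where "a < b" "x a = x b"
    unfolding inj_def by (metis linorder_neqE_nat)
  then have ex: "\<exists>i<b. x i = x b" by blast
  define J where "J = (LEAST j. \<exists>i<j. x i = x j)"
  have "\<exists>i<J. x i = x J" unfolding J_def by (rule LeastI_ex) (use ex in blast)
  moreover have "x s \<noteq> x t" if "s < t" "t < J" for s t
  proof
    assume "x s = x t"
    then have "J \<le> t" unfolding J_def using that(1) by (blast intro: Least_le)
    with that(2) show False by simp
  qed
  ultimately show thesis using that by blast
qed

text \<open>Along a nonbacktracking walk whose vertices x 0, ..., x (J - 1) are distinct, the edges
  used up to time J are distinct: an edge reused later would have to lead back to x i.\<close>
lemma walk_edges_distinct:
  assumes step: "\<And>n. eps (Suc n) \<noteq> eps n \<and> joins ends (eps (Suc n)) (x n) (x (Suc n))"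
    and distinct_below: "\<And>s t. s < t \<Longrightarrow> t < J \<Longrightarrow> x s \<noteq> x t"
    and "i < j" "j < J"
  shows "eps (Suc i) \<noteq> eps (Suc j)"
proof
  assume same: "eps (Suc i) = eps (Suc j)"
  show False
  proof (cases "j = Suc i")
    case True
    then show False using step[of j] same by simp
  next
    case False
    have "x i \<noteq> x j" using distinct_below assms(3,4) by blast
    then have "x (Suc i) = x j"
      using joins_cases[OF conjunct2[OF step[of i]]] step[of j] same by auto
    then show False using distinct_below[of "Suc i" j] assms(3,4) False by simp
  qed
qed

text \<open>A walk in a finite set T that never immediately reuses the edge it arrived by contains
  a cycle: the closed stretch ending at the first repeated vertex.\<close>
lemma nonbacktracking_walk_cycle:
  assumes fin: "finite T" and walk_in: "\<And>n. x n \<in> T"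
    and step: "\<And>n. eps (Suc n) \<in> F \<and> eps (Suc n) \<noteq> eps n \<and> joins ends (eps (Suc n)) (x n) (x (Suc n))"
  shows "has_cycle F ends T"
proof -
  obtain I J where IJ: "I < J" "x I = x J" and first: "\<And>s t. s < t \<Longrightarrow> t < J \<Longrightarrow> x s \<noteq> x t"
    using first_repeat[of T x] fin walk_in by blast
  define L where "L = J - I"
  define vs where "vs = map (\<lambda>t. x (I + t)) [0..<L]"
  define es where "es = map (\<lambda>t. eps (I + t + 1)) [0..<L]"
  have len: "length vs = L" "length es = L" "L \<ge> 1" using IJ by (simp_all add: vs_def es_def L_def)
  have vs_distinct: "x (I + s) \<noteq> x (I + t)" if "s < L" "t < L" "s \<noteq> t" for s t
  proof -
    have "I + s < J" "I + t < J" using that by (simp_all add: L_def)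
    then show ?thesis using that first[of "I + s" "I + t"] first[of "I + t" "I + s"]
      by (cases "s < t") auto
  qed
  have es_distinct: "eps (I + s + 1) \<noteq> eps (I + t + 1)" if "s < t" "t < L" for s t
    using walk_edges_distinct[of eps ends x J "I + s" "I + t"] step first that by (simp add: L_def)
  show ?thesis unfolding has_cycle_def
  proof (intro exI conjI allI impI)
    show "distinct vs"
      unfolding vs_def distinct_map by (auto intro!: inj_onI dest: vs_distinct)
    show "distinct es"
      unfolding es_def distinct_map
    proof (intro conjI inj_onI)
      fix s t assume "s \<in> set [0..<L]" "t \<in> set [0..<L]" "eps (I + s + 1) = eps (I + t + 1)"
      then show "s = t" using es_distinct[of s t] es_distinct[of t s] by (cases s t rule: linorder_cases) auto
    qed simp
    show "set vs \<subseteq> T" using walk_in by (auto simp: vs_def)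
    show "set es \<subseteq> F" using step by (auto simp: es_def)
    fix t assume "t < length vs"
    then have t: "t < L" by (simp add: len)
    have "joins ends (eps (I + t + 1)) (x (I + t)) (x (I + t + 1))" using step[of "I + t"] by simp
    moreover have "x (I + t + 1) = vs ! ((t + 1) mod length vs)"
    proof (cases "t + 1 < L")
      case True then show ?thesis by (simp add: len vs_def)
    next
      case False
      then have "t + 1 = L" using t by simp
      then have "I + t + 1 = J" "(t + 1) mod L = 0" using IJ by (simp_all add: L_def)
      then show ?thesis using IJ len by (simp add: vs_def)
    qed
    ultimately show "joins ends (es ! t) (vs ! t) (vs ! ((t + 1) mod length vs))"
      using t by (simp add: vs_def es_def)
  qed (use len in simp_all)
qed

text \<open>In a finite set of minimum degree two, leaving each vertex by an edge other than the one
  we came in on produces such a walk, hence a cycle.\<close>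
lemma min_deg2_has_cycle:
  assumes fin: "finite T" and md: "min_deg2 F ends T"
  shows "has_cycle F ends T"
proof -
  define other where "other e u = (if fst (ends e) = u then snd (ends e) else fst (ends e))" for e u
  have ex: "\<exists>e'. e' \<in> F \<and> e' \<noteq> e \<and> incident ends e' u \<and> inside ends T e'" if "u \<in> T" for u e
    using md that unfolding min_deg2_def two_edges_at_def by metis
  define next_edge where
    "next_edge u e = (SOME e'. e' \<in> F \<and> e' \<noteq> e \<and> incident ends e' u \<and> inside ends T e')" for u e
  have next_edge: "next_edge u e \<in> F \<and> next_edge u e \<noteq> e \<and> incident ends (next_edge u e) u
      \<and> inside ends T (next_edge u e)" if "u \<in> T" for u e
    using someI_ex[OF ex[OF that]] unfolding next_edge_def by blast
  define step where "step p = (other (next_edge (fst p) (snd p)) (fst p), next_edge (fst p) (snd p))" for p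
  obtain u0 where u0: "u0 \<in> T" using md unfolding min_deg2_def by auto
  define x where "x n = fst ((step ^^ n) (u0, undefined))" for n
  define eps where "eps n = snd ((step ^^ n) (u0, undefined))" for n
  have x_Suc: "x (Suc n) = other (next_edge (x n) (eps n)) (x n)"
    and eps_Suc: "eps (Suc n) = next_edge (x n) (eps n)" for n
    by (simp_all add: x_def eps_def step_def)
  have x_in: "x n \<in> T" for n
  proof (induction n)
    case 0 then show ?case using u0 by (simp add: x_def)
  next
    case (Suc n) then show ?case using next_edge[OF Suc] unfolding x_Suc other_def inside_def by auto
  qed
  show ?thesis
  proof (rule nonbacktracking_walk_cycle[OF fin x_in])
    show "eps (Suc n) \<in> F \<and> eps (Suc n) \<noteq> eps n \<and> joins ends (eps (Suc n)) (x n) (x (Suc n))" for n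
      using next_edge[OF x_in[of n]] unfolding x_Suc eps_Suc other_def incident_def joins_def
      by (auto simp: prod_eq_iff)
  qed
qed

lemma has_cycle_loop_or_min_deg2:
  assumes "has_cycle F ends S"
  shows "(\<exists>e\<in>F. fst (ends e) = snd (ends e) \<and> fst (ends e) \<in> S) \<or> (\<exists>T\<subseteq>S. finite T \<and> min_deg2 F ends T)"
proof -
  obtain vs es where c: "length vs \<ge> 1" "length es = length vs" "distinct vs" "distinct es"
    "set vs \<subseteq> S" "set es \<subseteq> F"
    and cyc: "\<And>i. i < length vs \<Longrightarrow> joins ends (es ! i) (vs ! i) (vs ! ((i + 1) mod length vs))"
    using assms unfolding has_cycle_def by blast
  define L where "L = length vs"
  show ?thesis
  proof (cases "L = 1")
    case True
    then have "joins ends (es ! 0) (vs ! 0) (vs ! 0)" "es ! 0 \<in> F" "vs ! 0 \<in> S"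
      using c cyc[of 0] by (auto simp: L_def)
    then show ?thesis unfolding joins_def by (intro disjI1 bexI[of _ "es ! 0"]) auto
  next
    case False
    then have L2: "L \<ge> 2" using c(1) by (simp add: L_def)
    have "min_deg2 F ends (set vs)" unfolding min_deg2_def
    proof (intro conjI ballI)
      show "set vs \<noteq> {}" using c(1) by auto
      fix u assume "u \<in> set vs"
      then obtain t where t: "t < L" "u = vs ! t" by (auto simp: in_set_conv_nth L_def)
      define t' where "t' = (if t = 0 then L - 1 else t - 1)"
      have t': "t' < L" "t' \<noteq> t" "(t' + 1) mod L = t" using t L2 by (auto simp: t'_def)
      have j1: "joins ends (es ! t) u (vs ! ((t + 1) mod L))" using cyc t by (simp add: L_def)
      have j2: "joins ends (es ! t') (vs ! t') u" using cyc[of t'] t t' by (simp add: L_def)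
      have "(t + 1) mod L < L" using L2 by simp
      then have "vs ! ((t + 1) mod L) \<in> set vs" "vs ! t' \<in> set vs" "u \<in> set vs"
        using t(1) t'(1) unfolding t(2) L_def by (simp_all add: nth_mem)
      moreover have "es ! t \<noteq> es ! t'" using c(2,4) t t' by (simp add: L_def nth_eq_iff_index_eq)
      moreover have "es ! t \<in> F" "es ! t' \<in> F" using c(2,6) t t' by (auto simp: L_def)
      moreover have "joins ends (es ! t') u (vs ! t')" using j2 by (rule joins_sym)
      ultimately show "two_edges_at F ends (set vs) u"
        using j1 by (intro two_edges_atI[of "es ! t" F "es ! t'" ends u "vs ! ((t + 1) mod L)" "vs ! t'"]) auto
    qed
    then show ?thesis using c(5) by blast
  qed
qed

lemma triangle_has_cycle:
  assumes "distinct [a, b, c]" "distinct [x, y, z]" "{x, y, z} \<subseteq> F"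
    and "joins ends x a b" "joins ends y b c" "joins ends z c a"
  shows "has_cycle F ends {a, b, c}"
  unfolding has_cycle_def
  by (rule exI[of _ "[a, b, c]"], rule exI[of _ "[x, y, z]"]) (use assms in \<open>auto simp: less_Suc_eq\<close>)

lemma min_deg2_transfer:
  assumes md: "min_deg2 F' ends' T" and sub: "T \<subseteq> T2"
    and edge_map: "\<And>u e. u \<in> T \<Longrightarrow> e \<in> F' \<Longrightarrow> incident ends' e u \<Longrightarrow> inside ends' T e \<Longrightarrow>
        \<phi> u e \<in> F \<and> incident ends (\<phi> u e) u \<and> inside ends T2 (\<phi> u e)"
    and edge_map_inj: "\<And>u e1 e2. u \<in> T \<Longrightarrow> e1 \<in> F' \<Longrightarrow> e2 \<in> F' \<Longrightarrow> e1 \<noteq> e2 \<Longrightarrow>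
        incident ends' e1 u \<Longrightarrow> incident ends' e2 u \<Longrightarrow> inside ends' T e1 \<Longrightarrow> inside ends' T e2 \<Longrightarrow>
        \<phi> u e1 \<noteq> \<phi> u e2"
    and new_vertices: "\<And>u. u \<in> T2 - T \<Longrightarrow> two_edges_at F ends T2 u"
  shows "min_deg2 F ends T2"
  unfolding min_deg2_def
proof (intro conjI ballI)
  show "T2 \<noteq> {}" using md sub by (auto simp: min_deg2_def)
  fix u assume u: "u \<in> T2"
  show "two_edges_at F ends T2 u"
  proof (cases "u \<in> T")
    case True
    then obtain e1 e2 where "e1 \<in> F'" "e2 \<in> F'" "e1 \<noteq> e2" "incident ends' e1 u" "incident ends' e2 u"
        "inside ends' T e1" "inside ends' T e2"
      using md unfolding min_deg2_def two_edges_at_def by blast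
    then show ?thesis unfolding two_edges_at_def
      using edge_map[OF True] edge_map_inj[OF True] by meson
  next
    case False then show ?thesis using new_vertices u by blast
  qed
qed

text \<open>A nonempty loopless acyclic vertex set S spans at most |S| - 1 edges: by
  min_deg2_has_cycle some vertex of S has at most one edge inside S, and removing it lets us
  induct.\<close>
lemma acyclic_inside_edges:
  assumes finF: "finite F" and ll: "loopless F ends"
  shows "finite S \<Longrightarrow> S \<noteq> {} \<Longrightarrow> \<not> has_cycle F ends S \<Longrightarrow> card {e\<in>F. inside ends S e} + 1 \<le> card S"
proof (induction "card S" arbitrary: S rule: less_induct)
  case less
  have "\<not> min_deg2 F ends S" using min_deg2_has_cycle less.prems by blast
  then obtain u where u: "u \<in> S" and few: "\<not> two_edges_at F ends S u"
    using less.prems(2) unfolding min_deg2_def by blast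
  define X where "X = {e\<in>F. inside ends S e \<and> incident ends e u}"
  have X1: "card X \<le> 1"
    using few finF card_le_Suc0_iff_eq[of X] unfolding two_edges_at_def X_def by auto
  define S' where "S' = S - {u}"
  have "{e\<in>F. inside ends S e} \<subseteq> {e\<in>F. inside ends S' e} \<union> X"
    by (auto simp: X_def S'_def inside_def incident_def)
  then have "card {e\<in>F. inside ends S e} \<le> card ({e\<in>F. inside ends S' e} \<union> X)"
    by (rule card_mono[rotated]) (use finF in \<open>simp add: X_def\<close>)
  also have "\<dots> \<le> card {e\<in>F. inside ends S' e} + card X" by (rule card_Un_le)
  finally have split: "card {e\<in>F. inside ends S e} \<le> card {e\<in>F. inside ends S' e} + card X" .
  have cS: "card S = card S' + 1" using card_Suc_Diff1[OF less.prems(1) u] by (simp add: S'_def)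
  show ?case
  proof (cases "S' = {}")
    case True
    then have "{e\<in>F. inside ends S e} = {}" using ll u by (auto simp: S'_def inside_def loopless_def)
    then have "card {e\<in>F. inside ends S e} = 0" by (simp only: card.empty)
    then show ?thesis using cS by linarith
  next
    case False
    have "\<not> has_cycle F ends S'" using less.prems(3) has_cycle_mono[of F ends S' S] by (auto simp: S'_def)
    then have "card {e\<in>F. inside ends S' e} + 1 \<le> card S'"
      using less.hyps[of S'] False less.prems(1) cS by (simp add: S'_def)
    then show ?thesis using split X1 cS by simp
  qed
qed

lemma cut_edges_sym: "cut_edges E ends A B = cut_edges E ends B A"
  unfolding cut_edges_def by auto

lemma degree_sum:
  assumes mg: "multigraph V E ends" and S: "S \<subseteq> V"
  shows "(\<Sum>v\<in>S. degree E ends v) = 2 * card {e\<in>E. inside ends S e} + card (cut_edges E ends S (V - S))"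
proof -
  have finE: "finite E" and finS: "finite S" and inV: "\<And>e. e \<in> E \<Longrightarrow> fst (ends e) \<in> V \<and> snd (ends e) \<in> V"
    using mg S finite_subset by (auto simp: multigraph_def)
  have ends_in_S: "card {e\<in>E. f (ends e) \<in> S} = (\<Sum>v\<in>S. card {e\<in>E. f (ends e) = v})" for f
  proof -
    have "{e\<in>E. f (ends e) \<in> S} = (\<Union>v\<in>S. {e\<in>E. f (ends e) = v})" by auto
    then show ?thesis using card_UN_disjoint[OF finS, of "\<lambda>v. {e\<in>E. f (ends e) = v}"] finE by auto
  qed
  define Inner where "Inner = {e\<in>E. inside ends S e}"
  define Out1 where "Out1 = {e\<in>E. fst (ends e) \<in> S \<and> snd (ends e) \<notin> S}"
  define Out2 where "Out2 = {e\<in>E. fst (ends e) \<notin> S \<and> snd (ends e) \<in> S}"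
  have "{e\<in>E. fst (ends e) \<in> S} = Inner \<union> Out1" "{e\<in>E. snd (ends e) \<in> S} = Inner \<union> Out2"
    "cut_edges E ends S (V - S) = Out1 \<union> Out2"
    using inV by (auto simp: Inner_def Out1_def Out2_def inside_def cut_edges_def)
  then have "card {e\<in>E. fst (ends e) \<in> S} = card Inner + card Out1"
    "card {e\<in>E. snd (ends e) \<in> S} = card Inner + card Out2"
    "card (cut_edges E ends S (V - S)) = card Out1 + card Out2"
    using finE by (simp_all add: card_Un_disjoint Inner_def Out1_def Out2_def inside_def disjoint_iff)
  moreover have "(\<Sum>v\<in>S. degree E ends v)
      = card {e\<in>E. fst (ends e) \<in> S} + card {e\<in>E. snd (ends e) \<in> S}"
    unfolding degree_def ends_in_S sum.distrib ..
  ultimately show ?thesis unfolding Inner_def by simp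
qed

text \<open>In a cubic graph a nonempty acyclic vertex set S is left by at least |S| + 2 edges, since
  3|S| counts twice the at most |S| - 1 inner edges plus the leaving edges.\<close>
lemma acyclic_cut_bound:
  assumes mg: "multigraph V E ends" and ll: "loopless E ends" and cu: "cubic V E ends"
    and S: "S \<subseteq> V" "S \<noteq> {}" and acyclic: "\<not> has_cycle E ends S"
  shows "card S + 2 \<le> card (cut_edges E ends S (V - S))"
proof -
  have finE: "finite E" and finS: "finite S" using mg S finite_subset by (auto simp: multigraph_def)
  have "3 * card S = (\<Sum>v\<in>S. degree E ends v)" using cu S by (simp add: cubic_def subset_iff)
  also have "\<dots> = 2 * card {e\<in>E. inside ends S e} + card (cut_edges E ends S (V - S))"
    by (rule degree_sum[OF mg S(1)])
  finally show ?thesis using acyclic_inside_edges[OF finE ll finS S(2) acyclic] by linarith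
qed

lemma cubic_incident_edges:
  assumes mg: "multigraph V E ends" and ll: "loopless E ends" and cu: "cubic V E ends"
    and v: "v \<in> V" and abc: "{a, b, c} \<subseteq> E" "distinct [a, b, c]"
    and inc: "incident ends a v" "incident ends b v" "incident ends c v"
  shows "{e\<in>E. incident ends e v} = {a, b, c}"
proof -
  have finE: "finite E" using mg by (simp add: multigraph_def)
  have "{e\<in>E. incident ends e v} = {e\<in>E. fst (ends e) = v} \<union> {e\<in>E. snd (ends e) = v}"
    by (auto simp: incident_def)
  moreover have "{e\<in>E. fst (ends e) = v} \<inter> {e\<in>E. snd (ends e) = v} = {}"
    using ll by (auto simp: loopless_def)
  ultimately have "card {e\<in>E. incident ends e v} = 3"
    using cu v finE unfolding cubic_def degree_def by (simp add: card_Un_disjoint)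
  moreover have "{a, b, c} \<subseteq> {e\<in>E. incident ends e v}" using abc inc by auto
  moreover have "card {a, b, c} = 3" using abc(2) by simp
  ultimately show ?thesis using finE by (metis (no_types, lifting) card_subset_eq finite_subset mem_Collect_eq subsetI)
qed

lemma card_sum_bool:
  fixes C :: "('a + bool) set"
  assumes "finite C"
  shows "card C = card (Inl -` C) + of_bool (Inr True \<in> C) + of_bool (Inr False \<in> C)"
proof -
  have "C = Inl -` C <+> Inr -` C"
  proof
    show "C \<subseteq> Inl -` C <+> Inr -` C"
    proof
      fix x assume "x \<in> C" then show "x \<in> Inl -` C <+> Inr -` C" by (cases x) auto
    qed
  qed auto
  moreover have "finite (Inl -` C)" "finite (Inr -` C)" using assms by (auto intro: finite_vimageI)
  moreover have "Inr -` C = (if Inr True \<in> C then {True} else {}) \<union> (if Inr False \<in> C then {False} else {})"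
    by (auto split: if_splits) (metis (full_types))+
  ultimately have "card C = card (Inl -` C) + card (Inr -` C)" by (metis card_Plus)
  also have "card (Inr -` C) = of_bool (Inr True \<in> C) + of_bool (Inr False \<in> C)"
    unfolding \<open>Inr -` C = _\<close> by simp
  finally show ?thesis by simp
qed

lemma split_edge_cases:
  fixes x :: "'a + bool"
  obtains (old) g where "x = Inl g" | (new_v1v4) "x = Inr True" | (new_v1'v4') "x = Inr False"
  by (metis (full_types) sumE)

text \<open>The split cut has k = old + [v1v4 crosses] +
  [v1'v4' crosses] edges, where p1, p4, q1, q4 record whether v1, v4, v1', v4' lie in A'.
  Adding v2, v3 to A' (to B') gives a cut of G with at most old plus the number of outer
  neighbours on the other side; such a cut has at least l edges if that other side is cyclic in G
  and at least its size plus two otherwise.\<close>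
lemma split_cut_arith:
  fixes k old l cutA cutB nA nB :: nat
  assumes "k = old + of_bool (p1 \<noteq> p4) + of_bool (q1 \<noteq> q4)" "k < l"
    and "cutA \<le> old + of_bool (\<not> p1) + of_bool (\<not> q1) + of_bool (\<not> p4) + of_bool (\<not> q4)"
    and "cutB \<le> old + of_bool p1 + of_bool q1 + of_bool p4 + of_bool q4"
    and "hA \<or> (p1 \<and> p4) \<or> (q1 \<and> q4)" "hB \<or> (\<not> p1 \<and> \<not> p4) \<or> (\<not> q1 \<and> \<not> q4)"
    and "hB \<Longrightarrow> l \<le> cutA" "\<not> hB \<Longrightarrow> nB + 2 \<le> cutA"
    and "hA \<Longrightarrow> l \<le> cutB" "\<not> hA \<Longrightarrow> nA + 2 \<le> cutB"
    and "2 * l + 2 \<le> nA + nB + 2"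
  shows "l \<le> k + 2 \<and> p1 = p4 \<and> q1 = q4"
  using assms by (cases p1; cases p4; cases q1; cases q4; cases hA; cases hB) auto

locale path_split =
  fixes V :: "'v set" and E :: "'e set" and ends :: "'e \<Rightarrow> 'v \<times> 'v"
    and v1 v2 v3 v4 v1' v4' :: 'v and e12 e23 e34 f2 f3 :: 'e
  assumes multigraph: "multigraph V E ends" and loopless: "loopless E ends" and cubic: "cubic V E ends"
    and path_vertices: "v1 \<in> V" "v2 \<in> V" "v3 \<in> V" "v4 \<in> V" "distinct [v1, v2, v3, v4]"
    and path_edges: "e12 \<in> E" "e23 \<in> E" "e34 \<in> E"
      "joins ends e12 v1 v2" "joins ends e23 v2 v3" "joins ends e34 v3 v4"
    and third_edge_v2: "f2 \<in> E" "f2 \<notin> {e12, e23}" "joins ends f2 v2 v1'" "v1' \<notin> {v1, v3}"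
    and third_edge_v3: "f3 \<in> E" "f3 \<notin> {e23, e34}" "joins ends f3 v3 v4'" "v4' \<notin> {v2, v4}"
begin

abbreviation "V' \<equiv> split_V V v2 v3"
abbreviation "E' \<equiv> split_E E ends v2 v3"
abbreviation "ends' \<equiv> split_ends ends v1 v4 v1' v4'"

lemma ends_of_path_edges:
  "ends e12 = (v1, v2) \<or> ends e12 = (v2, v1)" "ends e23 = (v2, v3) \<or> ends e23 = (v3, v2)"
  "ends e34 = (v3, v4) \<or> ends e34 = (v4, v3)" "ends f2 = (v2, v1') \<or> ends f2 = (v1', v2)"
  "ends f3 = (v3, v4') \<or> ends f3 = (v4', v3)"
  using path_edges third_edge_v2 third_edge_v3 by (auto simp: joins_def)

lemma outer_vertices: "v1' \<in> V" "v4' \<in> V" "v1' \<noteq> v2" "v4' \<noteq> v3"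
  using multigraph loopless third_edge_v2 third_edge_v3 ends_of_path_edges(4,5)
  by (auto simp: multigraph_def loopless_def)

lemma distinct_edges: "distinct [e12, e23, e34, f2, f3]"
  using ends_of_path_edges path_vertices(5) third_edge_v2(4) third_edge_v3(4) outer_vertices(3,4)
  by (auto simp: prod_eq_iff)

lemma edges_at_v2: "{e\<in>E. incident ends e v2} = {e12, e23, f2}"
  using distinct_edges ends_of_path_edges path_edges third_edge_v2
  by (intro cubic_incident_edges[OF multigraph loopless cubic path_vertices(2)]) (auto simp: incident_def)

lemma edges_at_v3: "{e\<in>E. incident ends e v3} = {e23, e34, f3}"
  using distinct_edges ends_of_path_edges path_edges third_edge_v3
  by (intro cubic_incident_edges[OF multigraph loopless cubic path_vertices(3)]) (auto simp: incident_def)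

lemma split_ends_simps [simp]:
  "ends' (Inl e) = ends e" "ends' (Inr True) = (v1, v4)" "ends' (Inr False) = (v1', v4')"
  by (simp_all add: split_ends_def)

lemma finite_split_E: "finite E'"
  using multigraph by (simp add: split_E_def multigraph_def)

lemma split_E_iff [simp]:
  "Inl e \<in> E' \<longleftrightarrow> e \<in> E \<and> fst (ends e) \<notin> {v2, v3} \<and> snd (ends e) \<notin> {v2, v3}"
  "Inr b \<in> E'"
  by (auto simp: split_E_def)

lemma loop_lifts:
  assumes "e \<in> E'" "fst (ends' e) = snd (ends' e)"
  shows "fst (ends' e) = v1' \<and> v1' = v4' \<and> has_cycle E ends {v1', v2, v3}"
proof -
  have new: "e = Inr False" and same: "v1' = v4'"
    using assms loopless path_vertices(5)
    by (cases e rule: split_edge_cases; auto simp: loopless_def)+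
  moreover have "has_cycle E ends {v1', v2, v3}"
  proof (rule triangle_has_cycle)
    show "distinct [v1', v2, v3]" using outer_vertices third_edge_v2(4) path_vertices(5) by auto
    show "distinct [f2, e23, f3]" using distinct_edges by auto
    show "joins ends f2 v1' v2" "joins ends f3 v3 v1'"
      using third_edge_v2(3) third_edge_v3(3) same by (auto simp: joins_def)
  qed (use path_edges third_edge_v2 third_edge_v3 in auto)
  ultimately show ?thesis using new same by (simp add: split_ends_def)
qed

lemma min_deg2_lifts_old:
  assumes md: "min_deg2 E' ends' T" and no_new: "\<not> {v1, v4} \<subseteq> T" "\<not> {v1', v4'} \<subseteq> T"
  shows "min_deg2 E ends T"
proof (rule min_deg2_transfer[OF md subset_refl, of "\<lambda>u. projl"])
  have old: "\<exists>g. e = Inl g \<and> g \<in> E" if "e \<in> E'" "inside ends' T e" for e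
    using that no_new by (cases e rule: split_edge_cases) (auto simp: inside_def)
  show "projl e \<in> E \<and> incident ends (projl e) u \<and> inside ends T (projl e)"
    if "e \<in> E'" "incident ends' e u" "inside ends' T e" for u e
    using old[OF that(1,3)] that by (auto simp: incident_def inside_def)
  show "projl e1 \<noteq> projl e2"
    if "u \<in> T" "e1 \<in> E'" "e2 \<in> E'" "e1 \<noteq> e2" "incident ends' e1 u" "incident ends' e2 u"
      "inside ends' T e1" "inside ends' T e2" for u e1 e2
    using that old[of e1] old[of e2] by auto
qed auto

text \<open>When T contains both ends of a new edge, v2 and v3 each have two edges inside T plus
  v2, v3: the edge v2v3 and an edge to v1 or v1' (to v4 or v4').\<close>
lemma path_interior_two_edges:
  assumes new: "{v1, v4} \<subseteq> T \<or> {v1', v4'} \<subseteq> T"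
  shows "two_edges_at E ends (T \<union> {v2, v3}) v2" and "two_edges_at E ends (T \<union> {v2, v3}) v3"
proof -
  have d: "e12 \<noteq> e23" "f2 \<noteq> e23" "e34 \<noteq> e23" "f3 \<noteq> e23" using distinct_edges by auto
  have j: "joins ends e12 v2 v1" "joins ends f2 v2 v1'" "joins ends e34 v3 v4" "joins ends f3 v3 v4'"
    "joins ends e23 v2 v3" "joins ends e23 v3 v2"
    using path_edges third_edge_v2 third_edge_v3 by (auto simp: joins_def)
  show "two_edges_at E ends (T \<union> {v2, v3}) v2"
  proof (cases "v1 \<in> T")
    case True then show ?thesis using d j path_edges(1,2)
      by (intro two_edges_atI[of e12 E e23 ends v2 v1 v3]) auto
  next
    case False then show ?thesis using new d j path_edges(2) third_edge_v2(1)
      by (intro two_edges_atI[of f2 E e23 ends v2 v1' v3]) auto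
  qed
  show "two_edges_at E ends (T \<union> {v2, v3}) v3"
  proof (cases "v4 \<in> T")
    case True then show ?thesis using d j path_edges(2,3)
      by (intro two_edges_atI[of e34 E e23 ends v3 v4 v2]) auto
  next
    case False then show ?thesis using new d j path_edges(2) third_edge_v3(1)
      by (intro two_edges_atI[of f3 E e23 ends v3 v4' v2]) auto
  qed
qed

text \<open>If T contains a new edge, replacing each new edge v1v4 (v1'v4') at a vertex by the edge
  of the path v1 v2 v3 v4 (v1' v2 v3 v4') it shortcuts shows that T together with v2, v3 has
  minimum degree two in G.\<close>
lemma min_deg2_lifts_new:
  assumes md: "min_deg2 E' ends' T" and new: "{v1, v4} \<subseteq> T \<or> {v1', v4'} \<subseteq> T"
  shows "min_deg2 E ends (T \<union> {v2, v3})"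
proof -
  define orig where "orig u e = (case e of Inl g \<Rightarrow> g
      | Inr True \<Rightarrow> if u = v1 then e12 else e34 | Inr False \<Rightarrow> if u = v1' then f2 else f3)" for u e
  show ?thesis
  proof (rule min_deg2_transfer[OF md _, of _ orig])
    show "orig u e \<in> E \<and> incident ends (orig u e) u \<and> inside ends (T \<union> {v2, v3}) (orig u e)"
      if "e \<in> E'" "incident ends' e u" "inside ends' T e" for u e
    proof (cases e rule: split_edge_cases)
      case (old g) then show ?thesis using that by (auto simp: orig_def incident_def inside_def)
    next
      case new_v1v4
      then have "u = v1 \<or> u = v4" "v1 \<in> T" "v4 \<in> T" using that by (auto simp: incident_def inside_def)
      then show ?thesis using new_v1v4 ends_of_path_edges(1,3) path_edges(1,3)
        by (auto simp: orig_def incident_def inside_def)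
    next
      case new_v1'v4'
      then have "u = v1' \<or> u = v4'" "v1' \<in> T" "v4' \<in> T" using that by (auto simp: incident_def inside_def)
      then show ?thesis using new_v1'v4' ends_of_path_edges(4,5) third_edge_v2(1) third_edge_v3(1)
        by (auto simp: orig_def incident_def inside_def)
    qed
    show "orig u e1 \<noteq> orig u e2"
      if "u \<in> T" "e1 \<in> E'" "e2 \<in> E'" "e1 \<noteq> e2" "incident ends' e1 u" "incident ends' e2 u"
        "inside ends' T e1" "inside ends' T e2" for u e1 e2
    proof -
      have old_avoids: "g \<notin> {e12, e23, e34, f2, f3}" if "Inl g \<in> E'" for g
        using that ends_of_path_edges by auto
      show ?thesis
        using that old_avoids distinct_edges
        by (cases e1 rule: split_edge_cases; cases e2 rule: split_edge_cases) (auto simp: orig_def)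
    qed
    show "two_edges_at E ends (T \<union> {v2, v3}) u" if "u \<in> T \<union> {v2, v3} - T" for u
      using that path_interior_two_edges[OF new] by auto
  qed auto
qed

lemma lift_cycle:
  assumes "has_cycle E' ends' S"
  shows "has_cycle E ends (S \<union> {v2, v3}) \<and> (has_cycle E ends S \<or> {v1, v4} \<subseteq> S \<or> {v1', v4'} \<subseteq> S)"
  using has_cycle_loop_or_min_deg2[OF assms]
proof (elim disjE bexE exE conjE)
  fix e assume "e \<in> E'" "fst (ends' e) = snd (ends' e)" "fst (ends' e) \<in> S"
  with loop_lifts[of e] show ?thesis by (auto elim: has_cycle_mono)
next
  fix T assume T: "T \<subseteq> S" "finite T" "min_deg2 E' ends' T"
  show ?thesis
  proof (cases "{v1, v4} \<subseteq> T \<or> {v1', v4'} \<subseteq> T")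
    case True
    then have "has_cycle E ends (T \<union> {v2, v3})"
      using T min_deg2_lifts_new by (intro min_deg2_has_cycle) auto
    then show ?thesis using True T(1) by (auto elim: has_cycle_mono)
  next
    case False
    then have "has_cycle E ends T" using T min_deg2_lifts_old by (intro min_deg2_has_cycle) auto
    then show ?thesis using T(1) has_cycle_mono[of E ends T] by blast
  qed
qed

definition outer_in :: "'v set \<Rightarrow> nat" where
  "outer_in Q = of_bool (v1 \<in> Q) + of_bool (v1' \<in> Q) + of_bool (v4 \<in> Q) + of_bool (v4' \<in> Q)"

definition outer_edges :: "'v set \<Rightarrow> 'e set" where
  "outer_edges Q = (if v1 \<in> Q then {e12} else {}) \<union> (if v1' \<in> Q then {f2} else {})
      \<union> (if v4 \<in> Q then {e34} else {}) \<union> (if v4' \<in> Q then {f3} else {})"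

lemma card_outer_edges: "card (outer_edges Q) \<le> outer_in Q"
proof -
  have single: "card (if b then {x} else {}) = of_bool b" for b and x :: 'e by simp
  have "card (outer_edges Q) \<le> card (if v1 \<in> Q then {e12} else {}) + card (if v1' \<in> Q then {f2} else {})
      + card (if v4 \<in> Q then {e34} else {}) + card (if v4' \<in> Q then {f3} else {})"
    unfolding outer_edges_def by (meson add_le_mono card_Un_le le_refl order_trans)
  then show ?thesis unfolding single outer_in_def .
qed

text \<open>Putting v2, v3 on the side P of a partition of the split graph: an edge of G leaving
  P plus v2, v3 is either an old edge of the split cut, or one of the four edges joining the path
  to its outer neighbours in Q (the edge v2v3 stays inside).\<close>
lemma lifted_cut_subset:
  assumes "vpartition V' P Q"
  shows "cut_edges E ends (P \<union> {v2, v3}) Q \<subseteq> Inl -` cut_edges E' ends' P Q \<union> outer_edges Q"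
proof
  fix e assume e: "e \<in> cut_edges E ends (P \<union> {v2, v3}) Q"
  have Q: "v2 \<notin> Q" "v3 \<notin> Q" using assms by (auto simp: vpartition_def split_V_def)
  have eE: "e \<in> E" and crosses: "(fst (ends e) \<in> P \<union> {v2, v3} \<and> snd (ends e) \<in> Q) \<or>
      (fst (ends e) \<in> Q \<and> snd (ends e) \<in> P \<union> {v2, v3})" using e by (auto simp: cut_edges_def)
  show "e \<in> Inl -` (cut_edges E' ends' P Q) \<union> outer_edges Q"
  proof (cases "incident ends e v2 \<or> incident ends e v3")
    case True
    then have "e \<in> {e\<in>E. incident ends e v2} \<union> {e\<in>E. incident ends e v3}" using eE by blast
    then consider "e = e12" | "e = e23" | "e = f2" | "e = e34" | "e = f3"
      unfolding edges_at_v2 edges_at_v3 by blast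
    then show ?thesis
    proof cases
      case 1
      have "v1 \<in> Q"
        using crossing_edge_end[OF path_edges(4) _ crosses[unfolded 1]] Q by blast
      then show ?thesis using 1 by (simp add: outer_edges_def)
    next
      case 2
      have "v2 \<in> Q" by (rule crossing_edge_end[OF path_edges(5) Q(2) crosses[unfolded 2]])
      then show ?thesis using Q(1) by contradiction
    next
      case 3
      have "v1' \<in> Q"
        using crossing_edge_end[OF third_edge_v2(3)[THEN joins_sym] _ crosses[unfolded 3]] Q by blast
      then show ?thesis using 3 by (simp add: outer_edges_def)
    next
      case 4
      have "v4 \<in> Q"
        using crossing_edge_end[OF path_edges(6)[THEN joins_sym] _ crosses[unfolded 4]] Q by blast
      then show ?thesis using 4 by (simp add: outer_edges_def)
    next
      case 5
      have "v4' \<in> Q"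
        using crossing_edge_end[OF third_edge_v3(3)[THEN joins_sym] _ crosses[unfolded 5]] Q by blast
      then show ?thesis using 5 by (simp add: outer_edges_def)
    qed
  next
    case False
    then have "Inl e \<in> E'" using eE by (auto simp: incident_def)
    then show ?thesis using crosses False by (auto simp: cut_edges_def incident_def)
  qed
qed

lemma lifted_cut_card:
  assumes "vpartition V' P Q"
  shows "card (cut_edges E ends (P \<union> {v2, v3}) Q) \<le> card (Inl -` cut_edges E' ends' P Q) + outer_in Q"
proof -
  let ?C = "cut_edges E' ends' P Q"
  have "finite (Inl -` ?C)"
    using finite_subset[OF _ finite_split_E, of ?C] by (intro finite_vimageI) (auto simp: cut_edges_def)
  then have "card (cut_edges E ends (P \<union> {v2, v3}) Q) \<le> card (Inl -` ?C \<union> outer_edges Q)"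
    using lifted_cut_subset[OF assms] by (intro card_mono) (auto simp: outer_edges_def)
  also have "\<dots> \<le> card (Inl -` ?C) + card (outer_edges Q)" by (rule card_Un_le)
  finally show ?thesis using card_outer_edges[of Q] by linarith
qed

lemma outer_vertices_split_V: "{v1, v4, v1', v4'} \<subseteq> V'"
  using path_vertices outer_vertices third_edge_v2(4) third_edge_v3(4) by (auto simp: split_V_def)

lemma outer_in_complement:
  assumes "vpartition V' P Q"
  shows "outer_in Q = of_bool (v1 \<notin> P) + of_bool (v1' \<notin> P) + of_bool (v4 \<notin> P) + of_bool (v4' \<notin> P)"
  using assms outer_vertices_split_V by (auto simp: outer_in_def vpartition_def)

lemma new_edges_crossing:
  assumes "vpartition V' P Q"
  shows "Inr True \<in> cut_edges E' ends' P Q \<longleftrightarrow> (v1 \<in> P) \<noteq> (v4 \<in> P)"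
    and "Inr False \<in> cut_edges E' ends' P Q \<longleftrightarrow> (v1' \<in> P) \<noteq> (v4' \<in> P)"
  using assms outer_vertices_split_V by (auto simp: cut_edges_def vpartition_def)

lemma card_split_partition:
  assumes "vpartition V' P Q"
  shows "card V = card P + card Q + 2"
proof -
  have finV: "finite V" using multigraph by (simp add: multigraph_def)
  have "P \<union> Q = V - {v2, v3}" "P \<inter> Q = {}" using assms by (auto simp: vpartition_def split_V_def)
  then have "card P + card Q = card (V - {v2, v3})" using finV by (metis card_Un_disjoint finite_Diff finite_Un)
  also have "\<dots> = card V - 2" using path_vertices finV by (simp add: card_Diff_subset)
  finally show ?thesis using path_vertices finV card_mono[of V "{v2, v3}"] by simp
qed

lemma lifted_cut_cyclic:
  assumes conn: "cyc_edge_connected l V E ends" and vp: "vpartition V' P Q"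
    and cycP: "has_cycle E' ends' P" and cycQ: "has_cycle E ends Q"
  shows "l \<le> card (cut_edges E ends (P \<union> {v2, v3}) Q)"
proof -
  have "vpartition V (P \<union> {v2, v3}) Q" using vp path_vertices by (auto simp: vpartition_def split_V_def)
  moreover have "has_cycle E ends (P \<union> {v2, v3})" using lift_cycle[OF cycP] by blast
  ultimately show ?thesis using conn cycQ by (auto simp: cyc_edge_connected_def cyclic_cut_def)
qed

lemma lifted_cut_acyclic:
  assumes vp: "vpartition V' P Q" and acyclic: "\<not> has_cycle E ends Q"
  shows "card Q + 2 \<le> card (cut_edges E ends (P \<union> {v2, v3}) Q)"
proof -
  have "Q \<subseteq> V" "Q \<noteq> {}" "V - Q = P \<union> {v2, v3}"
    using vp path_vertices by (auto simp: vpartition_def split_V_def)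
  then show ?thesis
    using acyclic_cut_bound[OF multigraph loopless cubic _ _ acyclic] cut_edges_sym by metis
qed

theorem small_split_cut:
  assumes conn: "cyc_edge_connected l V E ends" and big: "2 * l + 2 \<le> card V"
    and cut: "cyclic_cut V' E' ends' A' B'" and small: "card (cut_edges E' ends' A' B') < l"
  shows "l \<le> card (cut_edges E' ends' A' B') + 2
    \<and> Inr True \<notin> cut_edges E' ends' A' B' \<and> Inr False \<notin> cut_edges E' ends' A' B'"
proof -
  let ?C = "cut_edges E' ends' A' B'"
  let ?cutA = "cut_edges E ends (A' \<union> {v2, v3}) B'" and ?cutB = "cut_edges E ends (B' \<union> {v2, v3}) A'"
  have vpA: "vpartition V' A' B'" and cycA: "has_cycle E' ends' A'" and cycB: "has_cycle E' ends' B'"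
    using cut by (auto simp: cyclic_cut_def)
  then have vpB: "vpartition V' B' A'" by (auto simp: vpartition_def)
  have "l \<le> card ?C + 2 \<and> (v1 \<in> A') = (v4 \<in> A') \<and> (v1' \<in> A') = (v4' \<in> A')"
  proof (rule split_cut_arith[where old = "card (Inl -` ?C)" and cutA = "card ?cutA" and cutB = "card ?cutB"
        and hA = "has_cycle E ends A'" and hB = "has_cycle E ends B'"])
    show "card ?C = card (Inl -` ?C) + of_bool ((v1 \<in> A') \<noteq> (v4 \<in> A')) + of_bool ((v1' \<in> A') \<noteq> (v4' \<in> A'))"
      using card_sum_bool[of ?C] finite_subset[OF _ finite_split_E] new_edges_crossing[OF vpA]
      by (auto simp: cut_edges_def)
    show "card ?cutA \<le> card (Inl -` ?C) + of_bool (v1 \<notin> A') + of_bool (v1' \<notin> A')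
        + of_bool (v4 \<notin> A') + of_bool (v4' \<notin> A')"
      using lifted_cut_card[OF vpA] outer_in_complement[OF vpA] by simp
    show "card ?cutB \<le> card (Inl -` ?C) + of_bool (v1 \<in> A') + of_bool (v1' \<in> A')
        + of_bool (v4 \<in> A') + of_bool (v4' \<in> A')"
      using lifted_cut_card[OF vpB] cut_edges_sym[of E' ends' B' A'] by (simp add: outer_in_def)
    show "has_cycle E ends A' \<or> (v1 \<in> A' \<and> v4 \<in> A') \<or> (v1' \<in> A' \<and> v4' \<in> A')"
      using lift_cycle[OF cycA] by auto
    show "has_cycle E ends B' \<or> (v1 \<notin> A' \<and> v4 \<notin> A') \<or> (v1' \<notin> A' \<and> v4' \<notin> A')"
      using lift_cycle[OF cycB] vpA by (auto simp: vpartition_def)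
    show "2 * l + 2 \<le> card A' + card B' + 2" using big card_split_partition[OF vpA] by simp
  qed (use small lifted_cut_cyclic[OF conn] lifted_cut_acyclic vpA vpB cycA cycB in auto)
  then show ?thesis using new_edges_crossing[OF vpA] by auto
qed

end

text \<open>The theorem is small_split_cut for the data of the statement.\<close>
theorem mainTheorem3:
  fixes V :: "'v set" and E :: "'e set" and ends :: "'e \<Rightarrow> 'v \<times> 'v"
    and l :: nat and v1 v2 v3 v4 v1' v4' :: 'v and e12 e23 e34 f2 f3 :: 'e
  assumes "l \<ge> 1"
    and "multigraph V E ends" and "loopless E ends" and "cubic V E ends"
    and "cyc_edge_connected l V E ends"
    and "card V \<ge> 2 * l + 2"
    and "v1 \<in> V" "v2 \<in> V" "v3 \<in> V" "v4 \<in> V" "distinct [v1, v2, v3, v4]"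
    and "e12 \<in> E" "e23 \<in> E" "e34 \<in> E"
    and "joins ends e12 v1 v2" "joins ends e23 v2 v3" "joins ends e34 v3 v4"
    and "f2 \<in> E" "f2 \<notin> {e12, e23}" "joins ends f2 v2 v1'" "v1' \<notin> {v1, v3}"
    and "f3 \<in> E" "f3 \<notin> {e23, e34}" "joins ends f3 v3 v4'" "v4' \<notin> {v2, v4}"
    and "cyclic_cut (split_V V v2 v3) (split_E E ends v2 v3) (split_ends ends v1 v4 v1' v4') A' B'"
    and "card (cut_edges (split_E E ends v2 v3) (split_ends ends v1 v4 v1' v4') A' B') < l"
  shows "card (cut_edges (split_E E ends v2 v3) (split_ends ends v1 v4 v1' v4') A' B') + 2 \<ge> l
       \<and> Inr True \<notin> cut_edges (split_E E ends v2 v3) (split_ends ends v1 v4 v1' v4') A' B'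
       \<and> Inr False \<notin> cut_edges (split_E E ends v2 v3) (split_ends ends v1 v4 v1' v4') A' B'"
proof -
  interpret path_split V E ends v1 v2 v3 v4 v1' v4' e12 e23 e34 f2 f3
    by unfold_locales (use assms in auto)
  show ?thesis by (rule small_split_cut) (use assms in auto)
qed

end
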